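(* Let $s>1$, $\zeta(s)=\sum_{k=1}^\infty k^{-s}$, let $a_k=\frac{k^{-s}}{\zeta(s)}$ ($k\in\mathbb{N}$), and let $K$ be the associated generalized Cantor set. Then there are constants $c_1,c_2>0$ such that $$\frac{c_1}{(\ln(e/t))^{s-1}}\le |K(t)|\le \frac{c_2}{(\ln(e/t))^{s-1}}\quad\text{for all } t\in(0,1].$$
   Context: Generalized Cantor set for positive $(a_k)$ with $\sum a_k=1$: $K_0=[0,1]$; recursively $K_n$ is obtained from $K_{n-1}$ (a union of $2^{n-1}$ disjoint closed intervals) by removing from each of its intervals the open centered subinterval of length $a_n2^{-(n-1)}$; $K=\bigcap_n K_n$. For $t>0$, $K(t)=\{x\in\mathbb{R}:\operatorname{dist}(x,K)<t\}$ and $|\cdot|$ is Lebesgue measure. *)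

theory Defs
  imports "HOL-Analysis.Analysis"
begin

text \<open>Closed intervals [l,r] (as pairs) of the n-th stage K_n of the generalized Cantor set
  for a sequence a (indexed from 1; a 0 is unused).\<close>
fun cantor_intervals :: "(nat \<Rightarrow> real) \<Rightarrow> nat \<Rightarrow> (real \<times> real) set" where
  "cantor_intervals a 0 = {(0, 1)}"
| "cantor_intervals a (Suc n) =
     (\<Union>(l, r) \<in> cantor_intervals a n.
        let m = (l + r) / 2; g = a (Suc n) / 2 ^ n in
        {(l, m - g / 2), (m + g / 2, r)})"

definition cantor_stage :: "(nat \<Rightarrow> real) \<Rightarrow> nat \<Rightarrow> real set" where
  "cantor_stage a n = (\<Union>(l, r) \<in> cantor_intervals a n. {l..r})"

definition gen_cantor :: "(nat \<Rightarrow> real) \<Rightarrow> real set" where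
  "gen_cantor a = (\<Inter>n. cantor_stage a n)"

definition nbhd :: "real set \<Rightarrow> real \<Rightarrow> real set" where
  "nbhd K t = {x. infdist x K < t}"

definition zeta_real :: "real \<Rightarrow> real" where
  "zeta_real s = (\<Sum>k. (real (Suc k)) powr (- s))"

end

theory Submission
  imports Defs
begin

text \<open>
  All intervals of the n-th stage K_n have the same length
  L_n = (1 - a_1 - ... - a_n) / 2^n, and their left endpoints lie in K.
  Hence K_n is contained in K(t) as soon as L_n < t, which gives
  |K(t)| \<ge> |K_n| \<ge> 1 - a_1 - ... - a_n; and K(t) is covered by the 2^n intervals
  of K_n enlarged by t, which gives |K(t)| \<le> 2^n L_n + 2^(n+1) t.
  For a_k = k^-s / zeta(s) the quantity 2^n L_n = 1 - a_1 - ... - a_n is the tail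
  of the zeta series, of order n^(1-s). For the lower bound take n \<approx> log_2 (1/t),
  so that L_n \<le> 2^-n < t; for the upper bound take n \<approx> log_2 (1/t) / 2, so that
  2^(n+1) t \<le> 2 sqrt t, which is O(ln (e/t)^(1-s)). In both cases n + 1 is
  comparable to ln (e/t).
\<close>

section \<open>Tails of the p-series\<close>

lemma powr_neg_le_diff_powr:
  fixes s x :: real
  assumes s: "s > 1" and x: "x > 0"
  shows "(x + 1) powr (- s) \<le> (x powr (1 - s) - (x + 1) powr (1 - s)) / (s - 1)"
proof -
  obtain z where z: "x < z" "z < x + 1"
    and mvt: "(x + 1) powr (1 - s) - x powr (1 - s) = (x + 1 - x) * ((1 - s) * z powr (- s))"
  proof (rule exE[OF MVT2[of x "x + 1" "\<lambda>y. y powr (1 - s)" "\<lambda>y. (1 - s) * y powr (- s)"]])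
    fix y assume "x \<le> y"
    then show "DERIV (\<lambda>y. y powr (1 - s)) y :> (1 - s) * y powr (- s)"
      using x has_real_derivative_powr[of y "1 - s"] by simp
  qed auto
  have "(s - 1) * (x + 1) powr (- s) \<le> (s - 1) * z powr (- s)"
    using z x s by (intro mult_left_mono powr_mono2') auto
  then show ?thesis
    using mvt s by (simp add: pos_le_divide_eq algebra_simps)
qed

lemma p_series_tail_le:
  fixes s :: real
  assumes s: "s > 1" and m: "m > 0"
  shows "(\<Sum>j. real (j + m) powr (- s)) \<le> s / (s - 1) * real m powr (1 - s)"
proof -
  have summable: "summable (\<lambda>j. real (j + k) powr (- s))" for k
    using s summable_iff_shift[of "\<lambda>n. real n powr (- s)" k] by (simp add: summable_real_powr_iff)
  have "(\<lambda>j. real (m + j) powr (1 - s)) \<longlonglongrightarrow> 0"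
    using s filterlim_tendsto_add_at_top[OF tendsto_const filterlim_real_sequentially, of "real m"]
    by (intro tendsto_neg_powr) auto
  then have tele: "(\<lambda>j. (real (m + j) powr (1 - s) - real (m + Suc j) powr (1 - s)) / (s - 1))
      sums (real m powr (1 - s) / (s - 1))"
    using telescope_sums'[of "\<lambda>j. real (m + j) powr (1 - s)"] sums_divide by fastforce
  have "(\<Sum>j. real (j + m) powr (- s)) = real m powr (- s) + (\<Sum>j. real (j + Suc m) powr (- s))"
    using suminf_split_head[OF summable[of m]] summable by simp
  also have "\<dots> \<le> real m powr (1 - s) + real m powr (1 - s) / (s - 1)"
  proof (intro add_mono)
    show "real m powr (- s) \<le> real m powr (1 - s)"
      using m by (intro powr_mono) auto
    have "(\<Sum>j. real (j + Suc m) powr (- s))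
        \<le> (\<Sum>j. (real (m + j) powr (1 - s) - real (m + Suc j) powr (1 - s)) / (s - 1))"
      using powr_neg_le_diff_powr[OF s, of "real (m + j)" for j] m
      by (intro suminf_le summable sums_summable[OF tele]) (simp add: add_ac)
    also have "\<dots> = real m powr (1 - s) / (s - 1)"
      using tele by (simp add: sums_iff)
    finally show "(\<Sum>j. real (j + Suc m) powr (- s)) \<le> real m powr (1 - s) / (s - 1)" .
  qed
  also have "\<dots> = s / (s - 1) * real m powr (1 - s)"
    using s by (simp add: field_simps)
  finally show ?thesis .
qed

lemma p_series_tail_ge:
  fixes s :: real
  assumes s: "s > 1"
  shows "2 powr (- s) * real m powr (1 - s) \<le> (\<Sum>j. real (j + m) powr (- s))"
proof -
  have "2 powr (- s) * real m powr (1 - s) = (\<Sum>j<m. real (2 * m) powr (- s))"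
    by (cases "m = 0") (simp_all add: powr_mult powr_diff powr_minus field_simps)
  also have "\<dots> \<le> (\<Sum>j<m. real (j + m) powr (- s))"
    using s by (intro sum_mono powr_mono2') auto
  also have "\<dots> \<le> (\<Sum>j. real (j + m) powr (- s))"
    using s summable_iff_shift[of "\<lambda>n. real n powr (- s)" m]
    by (intro sum_le_suminf) (auto simp: summable_real_powr_iff)
  finally show ?thesis .
qed

lemma powr_one_minus_eq_divide: "x powr (1 - a) = 1 / x powr (a - 1)" for x a :: real
  using powr_minus_divide[of x "a - 1"] by simp

section \<open>Generalized Cantor sets\<close>

definition cantor_length :: "(nat \<Rightarrow> real) \<Rightarrow> nat \<Rightarrow> real" where
  "cantor_length a n = (1 - (\<Sum>k=1..n. a k)) / 2 ^ n"

lemma finite_cantor_intervals: "finite (cantor_intervals a n)"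
  by (induction n) (auto simp: Let_def)

lemma card_cantor_intervals_le: "card (cantor_intervals a n) \<le> 2 ^ n"
proof (induction n)
  case (Suc n)
  have "card (cantor_intervals a (Suc n)) \<le> (\<Sum>p\<in>cantor_intervals a n. 2)"
    unfolding cantor_intervals.simps
    by (intro order_trans[OF card_UN_le[OF finite_cantor_intervals] sum_mono])
      (auto simp: Let_def card_insert_if split: prod.splits)
  with Suc show ?case by simp
qed simp

lemma cantor_length_Suc:
  "cantor_length a (Suc n) = (cantor_length a n - a (Suc n) / 2 ^ n) / 2"
  by (simp add: cantor_length_def field_simps)

lemma cantor_interval_length:
  "(l, r) \<in> cantor_intervals a n \<Longrightarrow> r - l = cantor_length a n"
proof (induction n arbitrary: l r)
  case (Suc n)
  then show ?case
    by (auto simp: Let_def cantor_length_Suc field_simps dest!: Suc.IH)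
qed (simp add: cantor_length_def)

lemma cantor_interval_left_endpoint_persists:
  assumes "(l, r) \<in> cantor_intervals a n" "n \<le> m"
  shows "\<exists>r'. (l, r') \<in> cantor_intervals a m"
  using assms(2)
proof (induction m rule: dec_induct)
  case (step m)
  then obtain r' where "(l, r') \<in> cantor_intervals a m" by blast
  then show ?case by (auto simp: Let_def)
qed (use assms in blast)

lemma cantor_stage_Suc:
  "cantor_stage a (Suc n) =
     (\<Union>(l, r) \<in> cantor_intervals a n.
        {l .. (l + r) / 2 - a (Suc n) / 2 ^ n / 2} \<union> {(l + r) / 2 + a (Suc n) / 2 ^ n / 2 .. r})"
  by (auto simp: cantor_stage_def Let_def)

lemma cantor_stage_subset_Suc_Un_gaps:
  "cantor_stage a n \<subseteq> cantor_stage a (Suc n) \<union>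
     (\<Union>(l, r) \<in> cantor_intervals a n.
        {(l + r) / 2 - a (Suc n) / 2 ^ n / 2 .. (l + r) / 2 + a (Suc n) / 2 ^ n / 2})"
proof
  fix x assume "x \<in> cantor_stage a n"
  then obtain l r where lr: "(l, r) \<in> cantor_intervals a n" "x \<in> {l .. r}"
    by (auto simp: cantor_stage_def)
  define c h where "c = (l + r) / 2" and "h = a (Suc n) / 2 ^ n / 2"
  have "x \<in> {l .. c - h} \<union> {c + h .. r} \<or> x \<in> {c - h .. c + h}"
    using lr(2) by auto
  then show "x \<in> cantor_stage a (Suc n) \<union>
     (\<Union>(l, r) \<in> cantor_intervals a n.
        {(l + r) / 2 - a (Suc n) / 2 ^ n / 2 .. (l + r) / 2 + a (Suc n) / 2 ^ n / 2})"
  proof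
    assume "x \<in> {l .. c - h} \<union> {c + h .. r}"
    then have "x \<in> cantor_stage a (Suc n)"
      unfolding cantor_stage_Suc by (intro UN_I[OF lr(1)]) (simp add: c_def h_def)
    then show ?thesis ..
  next
    assume "x \<in> {c - h .. c + h}"
    then show ?thesis
      by (intro UnI2 UN_I[OF lr(1)]) (simp add: c_def h_def)
  qed
qed

lemma lmeasurable_UN_Icc:
  fixes f g :: "'i \<Rightarrow> real"
  assumes "finite I"
  shows "(\<Union>i\<in>I. {f i .. g i}) \<in> lmeasurable"
  using assms by (intro fmeasurable.finite_UN) auto

lemma measure_UN_Icc_le:
  fixes f g :: "'i \<Rightarrow> real"
  assumes "finite I" "\<And>i. i \<in> I \<Longrightarrow> f i \<le> g i"
  shows "measure lebesgue (\<Union>i\<in>I. {f i .. g i}) \<le> (\<Sum>i\<in>I. g i - f i)"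
  using measure_UNION_le[OF assms(1), of "\<lambda>i. {f i .. g i}" lebesgue] assms(2) by simp

lemma lmeasurable_cantor_stage: "cantor_stage a n \<in> lmeasurable"
  unfolding cantor_stage_def case_prod_beta by (intro lmeasurable_UN_Icc finite_cantor_intervals)

lemma infdist_less_imp_dist_less:
  assumes "A \<noteq> {}" "infdist x A < e"
  obtains y where "y \<in> A" "dist x y < e"
proof -
  have "(INF y\<in>A. dist x y) < e"
    using assms by (simp add: infdist_notempty)
  then show thesis
    using that assms(1) by (auto simp: cINF_less_iff)
qed

context
  fixes a :: "nat \<Rightarrow> real"
  assumes nonneg: "\<And>k. a k \<ge> 0" and partial_sums_le_1: "\<And>n. (\<Sum>k=1..n. a k) \<le> 1"
begin

lemma cantor_length_nonneg: "cantor_length a n \<ge> 0"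
  using partial_sums_le_1[of n] by (simp add: cantor_length_def)

lemma cantor_length_le: "cantor_length a n \<le> 1 / 2 ^ n"
  using sum_nonneg[of "{1..n}" a] nonneg by (simp add: cantor_length_def divide_right_mono)

lemma cantor_interval_le:
  assumes "(l, r) \<in> cantor_intervals a n"
  shows "l \<le> r"
  using cantor_interval_length[OF assms] cantor_length_nonneg[of n] by simp

lemma decseq_cantor_stage: "decseq (cantor_stage a)"
proof (rule decseq_SucI)
  fix n
  define h where "h = a (Suc n) / 2 ^ n / 2"
  have "h \<ge> 0"
    using nonneg[of "Suc n"] by (simp add: h_def)
  have piece_subset: "(case p of (l, r) \<Rightarrow> {l .. (l + r) / 2 - h} \<union> {(l + r) / 2 + h .. r})
      \<subseteq> (case p of (l, r) \<Rightarrow> {l .. r})"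
    if "p \<in> cantor_intervals a n" for p
  proof -
    obtain l r where p: "p = (l, r)" by fastforce
    have "(l + r) / 2 - h \<le> r"
      using cantor_interval_le[OF that[unfolded p]] \<open>h \<ge> 0\<close> by (simp add: field_simps)
    moreover have "l \<le> (l + r) / 2 + h"
      using cantor_interval_le[OF that[unfolded p]] \<open>h \<ge> 0\<close> by (simp add: field_simps)
    ultimately show ?thesis
      unfolding p by auto
  qed
  show "cantor_stage a (Suc n) \<subseteq> cantor_stage a n"
    unfolding cantor_stage_Suc h_def[symmetric] unfolding cantor_stage_def
    by (intro UN_mono order_refl piece_subset)
qed

lemma left_endpoint_in_gen_cantor:
  assumes "(l, r) \<in> cantor_intervals a n"
  shows "l \<in> gen_cantor a"
  unfolding gen_cantor_def
proof
  fix m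
  obtain r' where r': "(l, r') \<in> cantor_intervals a (max n m)"
    using cantor_interval_left_endpoint_persists[OF assms max.cobounded1] ..
  then have "l \<in> cantor_stage a (max n m)"
    using r' cantor_interval_le[OF r'] unfolding cantor_stage_def by (intro UN_I[of "(l, r')"]) auto
  then show "l \<in> cantor_stage a m"
    using decseqD[OF decseq_cantor_stage max.cobounded2] by blast
qed

lemma measure_cantor_stage_ge: "1 - (\<Sum>k=1..n. a k) \<le> measure lebesgue (cantor_stage a n)"
proof (induction n)
  case (Suc n)
  define g where "g = a (Suc n) / 2 ^ n"
  define G where "G = (\<Union>(l, r) \<in> cantor_intervals a n. {(l + r) / 2 - g / 2 .. (l + r) / 2 + g / 2})"
  have G: "G \<in> lmeasurable"
    unfolding G_def case_prod_beta by (intro lmeasurable_UN_Icc finite_cantor_intervals)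
  have "measure lebesgue G \<le> card (cantor_intervals a n) * g"
    unfolding G_def case_prod_beta using nonneg[of "Suc n"]
    by (intro measure_UN_Icc_le[THEN order_trans] finite_cantor_intervals) (simp_all add: g_def)
  also have "\<dots> \<le> 2 ^ n * g"
    using card_cantor_intervals_le[of a n] nonneg[of "Suc n"]
    by (intro mult_right_mono) (simp_all add: g_def flip: of_nat_power)
  also have "\<dots> = a (Suc n)"
    by (simp add: g_def)
  finally have measure_G: "measure lebesgue G \<le> a (Suc n)" .
  have "measure lebesgue (cantor_stage a n) \<le> measure lebesgue (cantor_stage a (Suc n) \<union> G)"
    using cantor_stage_subset_Suc_Un_gaps[of a n] lmeasurable_cantor_stage G
    by (intro measure_mono_fmeasurable) (auto simp: G_def g_def)
  also have "\<dots> \<le> measure lebesgue (cantor_stage a (Suc n)) + measure lebesgue G"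
    using lmeasurable_cantor_stage G by (intro measure_Un_le) auto
  finally show ?case
    using Suc.IH measure_G by simp
qed (simp add: cantor_stage_def)

lemma nbhd_gen_cantor_subset:
  "nbhd (gen_cantor a) t \<subseteq> (\<Union>(l, r) \<in> cantor_intervals a n. {l - t .. r + t})"
proof
  fix x assume "x \<in> nbhd (gen_cantor a) t"
  then have "infdist x (gen_cantor a) < t"
    by (simp add: nbhd_def)
  moreover have "gen_cantor a \<noteq> {}"
    using left_endpoint_in_gen_cantor[of 0 1 0] by auto
  ultimately obtain y where y: "y \<in> gen_cantor a" "dist x y < t"
    using infdist_less_imp_dist_less by blast
  then have "y \<in> cantor_stage a n"
    by (auto simp: gen_cantor_def)
  then obtain l r where lr: "(l, r) \<in> cantor_intervals a n" "y \<in> {l .. r}"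
    by (auto simp: cantor_stage_def)
  have "x \<in> {l - t .. r + t}"
    using lr(2) y(2) by (auto simp: dist_real_def)
  then show "x \<in> (\<Union>(l, r) \<in> cantor_intervals a n. {l - t .. r + t})"
    by (intro UN_I[OF lr(1)]) simp
qed

lemma lmeasurable_nbhd_gen_cantor: "nbhd (gen_cantor a) t \<in> lmeasurable"
proof (rule lmeasurable_open)
  show "open (nbhd (gen_cantor a) t)"
    unfolding nbhd_def by (intro open_Collect_less continuous_intros)
  have "bounded (\<Union>(l, r) \<in> cantor_intervals a 0. {l - t .. r + t})"
    by simp
  then show "bounded (nbhd (gen_cantor a) t)"
    using nbhd_gen_cantor_subset[of t 0] bounded_subset by blast
qed

lemma measure_nbhd_gen_cantor_le:
  assumes "t \<ge> 0"
  shows "measure lebesgue (nbhd (gen_cantor a) t) \<le> 2 ^ n * (cantor_length a n + 2 * t)"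
proof -
  have "(\<Union>(l, r) \<in> cantor_intervals a n. {l - t .. r + t}) \<in> lmeasurable"
    unfolding case_prod_beta by (intro lmeasurable_UN_Icc finite_cantor_intervals)
  then have "measure lebesgue (nbhd (gen_cantor a) t)
      \<le> measure lebesgue (\<Union>(l, r) \<in> cantor_intervals a n. {l - t .. r + t})"
    using nbhd_gen_cantor_subset lmeasurable_nbhd_gen_cantor
    by (intro measure_mono_fmeasurable) auto
  also have "\<dots> \<le> (\<Sum>(l, r) \<in> cantor_intervals a n. (r + t) - (l - t))"
    using cantor_interval_le assms unfolding case_prod_beta
    by (intro measure_UN_Icc_le finite_cantor_intervals) force
  also have "\<dots> = card (cantor_intervals a n) * (cantor_length a n + 2 * t)"
    using cantor_interval_length by (simp add: case_prod_beta)
  also have "\<dots> \<le> 2 ^ n * (cantor_length a n + 2 * t)"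
    using card_cantor_intervals_le cantor_length_nonneg assms
    by (intro mult_right_mono) (simp_all flip: of_nat_power)
  finally show ?thesis .
qed

lemma cantor_stage_subset_nbhd:
  assumes "cantor_length a n < t"
  shows "cantor_stage a n \<subseteq> nbhd (gen_cantor a) t"
proof
  fix x assume "x \<in> cantor_stage a n"
  then obtain l r where lr: "(l, r) \<in> cantor_intervals a n" "x \<in> {l .. r}"
    by (auto simp: cantor_stage_def)
  have "infdist x (gen_cantor a) \<le> r - l"
    using left_endpoint_in_gen_cantor[OF lr(1)] lr(2)
    by (intro infdist_le2) (auto simp: dist_real_def)
  with assms show "x \<in> nbhd (gen_cantor a) t"
    using cantor_interval_length[OF lr(1)] by (simp add: nbhd_def)
qed

lemma measure_nbhd_gen_cantor_ge:
  assumes "cantor_length a n < t"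
  shows "1 - (\<Sum>k=1..n. a k) \<le> measure lebesgue (nbhd (gen_cantor a) t)"
  using measure_cantor_stage_ge[of n] lmeasurable_cantor_stage lmeasurable_nbhd_gen_cantor
    measure_mono_fmeasurable[OF cantor_stage_subset_nbhd[OF assms]] by fastforce

end

section \<open>The zeta weights\<close>

definition zeta_weight :: "real \<Rightarrow> nat \<Rightarrow> real" where
  "zeta_weight s k = real k powr (- s) / zeta_real s"

definition zeta_tail :: "real \<Rightarrow> nat \<Rightarrow> real" where
  "zeta_tail s n = (\<Sum>j. real (j + Suc n) powr (- s))"

context
  fixes s :: real
  assumes s: "s > 1"
begin

lemma summable_zeta_terms: "summable (\<lambda>k. real (Suc k) powr (- s))"
  using s summable_Suc_iff[of "\<lambda>n. real n powr (- s)"] by (simp add: summable_real_powr_iff)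

lemma zeta_real_pos: "zeta_real s > 0"
  unfolding zeta_real_def using summable_zeta_terms by (intro suminf_pos) auto

lemma zeta_real_split: "zeta_real s = (\<Sum>k=1..n. real k powr (- s)) + zeta_tail s n"
  using suminf_split_initial_segment[OF summable_zeta_terms, of n]
  by (simp add: zeta_real_def zeta_tail_def sum.atLeast1_atMost_eq add_ac)

lemma one_minus_sum_zeta_weight: "1 - (\<Sum>k=1..n. zeta_weight s k) = zeta_tail s n / zeta_real s"
  using zeta_real_split[of n] zeta_real_pos
  by (simp add: zeta_weight_def field_simps flip: sum_divide_distrib)

lemma zeta_tail_nonneg: "zeta_tail s n \<ge> 0"
  unfolding zeta_tail_def
  using s summable_iff_shift[of "\<lambda>n. real n powr (- s)" "Suc n"]
  by (intro suminf_nonneg) (auto simp: summable_real_powr_iff)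

lemma zeta_weight_nonneg: "zeta_weight s k \<ge> 0"
  using zeta_real_pos by (simp add: zeta_weight_def)

lemma sum_zeta_weight_le_1: "(\<Sum>k=1..n. zeta_weight s k) \<le> 1"
  using one_minus_sum_zeta_weight[of n] divide_nonneg_pos[OF zeta_tail_nonneg[of n] zeta_real_pos] by linarith

lemma cantor_length_zeta_weight: "cantor_length (zeta_weight s) n = zeta_tail s n / zeta_real s / 2 ^ n"
  unfolding cantor_length_def one_minus_sum_zeta_weight ..

lemma zeta_tail_le: "zeta_tail s n \<le> s / (s - 1) / real (Suc n) powr (s - 1)"
  using p_series_tail_le[OF s, of "Suc n"] by (simp add: zeta_tail_def powr_one_minus_eq_divide)

lemma zeta_tail_ge: "2 powr (- s) / real (Suc n) powr (s - 1) \<le> zeta_tail s n"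
  using p_series_tail_ge[OF s, of "Suc n"] by (simp add: zeta_tail_def powr_one_minus_eq_divide)

end

section \<open>Choice of the stage\<close>

lemma ln_exp_div: "t > 0 \<Longrightarrow> ln (exp 1 / t) = 1 - ln t" for t :: real
  using ln_div[of "exp 1" t] by simp

lemma sqrt_eq_exp_ln_half: "x > 0 \<Longrightarrow> sqrt x = exp (ln x / 2)"
  by (metis exp_ln less_imp_le ln_sqrt real_sqrt_gt_zero)

lemma exists_level_below:
  fixes t :: real
  assumes "0 < t" "t \<le> 1"
  obtains n where "1 / 2 ^ n < t" "real (Suc n) \<le> 2 / ln 2 * ln (exp 1 / t)"
proof
  define u where "u = - ln t"
  have u: "u \<ge> 0" and t: "t = exp (- u)"
    using assms by (simp_all add: u_def)
  define n where "n = nat \<lfloor>u / ln 2\<rfloor> + 1"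
  have n: "u / ln 2 < real n" "real n \<le> u / ln 2 + 1"
    using u by (simp_all add: n_def of_nat_nat) linarith
  have "exp u < exp (real n * ln 2)"
    using n(1) by (simp add: divide_less_eq)
  then show "1 / 2 ^ n < t"
    unfolding t by (simp add: exp_minus exp_of_nat_mult field_simps)
  have "2 \<le> 2 / ln (2 :: real)"
    using ln_2_less_1 by (simp add: field_simps)
  moreover have "2 / ln 2 * (1 + u) = 2 / ln 2 + 2 * (u / ln 2)"
    by (simp add: field_simps)
  moreover have "0 \<le> u / ln 2"
    using u by simp
  ultimately have "u / ln 2 + 2 \<le> 2 / ln 2 * (1 + u)"
    by linarith
  then show "real (Suc n) \<le> 2 / ln 2 * ln (exp 1 / t)"
    using n(2) assms(1) by (simp add: ln_exp_div u_def)
qed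

lemma exists_level_above:
  fixes t :: real
  assumes "0 < t" "t \<le> 1"
  obtains n where "2 ^ n * t \<le> sqrt t" "ln (exp 1 / t) \<le> 3 * real (Suc n)"
proof
  define u where "u = - ln t"
  have u: "u \<ge> 0" and t: "t = exp (- u)"
    using assms by (simp_all add: u_def)
  define n where "n = nat \<lfloor>u / (2 * ln 2)\<rfloor>"
  have n: "u / (2 * ln 2) - 1 < real n" "real n \<le> u / (2 * ln 2)"
    using u by (simp_all add: n_def of_nat_nat)
  have "2 ^ n = exp (real n * ln 2)"
    by (simp add: exp_of_nat_mult)
  also have "\<dots> \<le> exp (u / 2)"
    using n(2) by (simp add: field_simps)
  finally have "2 ^ n * t \<le> exp (u / 2) * t"
    using assms(1) by (intro mult_right_mono) auto
  also have "\<dots> = exp (u / 2) * exp (- u)"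
    using t by simp
  also have "\<dots> = exp (- u / 2)"
    by (simp flip: exp_add)
  also have "\<dots> = sqrt t"
    using assms(1) by (simp add: sqrt_eq_exp_ln_half u_def)
  finally show "2 ^ n * t \<le> sqrt t" .
  have "u / 2 \<le> u / (2 * ln 2)"
    using u ln_2_less_1 by (intro divide_left_mono) auto
  then show "ln (exp 1 / t) \<le> 3 * real (Suc n)"
    using n(1) u assms(1) by (simp add: ln_exp_div u_def)
qed

lemma powr_le_exp_half:
  fixes a x :: real
  assumes "a > 0" "x > 0"
  shows "x powr a \<le> (2 * a) powr a * exp (x / 2)"
proof -
  have "ln (x / (2 * a)) \<le> x / (2 * a) - 1"
    using assms by (intro ln_le_minus_one) auto
  then have "a * ln x \<le> a * ln (2 * a) + x / 2"
    using assms by (simp add: ln_div field_simps)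
  then show ?thesis
    using assms by (simp add: powr_def exp_add [symmetric])
qed

lemma sqrt_le_ln_powr:
  fixes a t :: real
  assumes "a > 0" "0 < t" "t \<le> 1"
  shows "sqrt t \<le> (2 * a) powr a * exp (1 / 2) / ln (exp 1 / t) powr a"
proof -
  have ell: "ln (exp 1 / t) \<ge> 1"
    using assms by (simp add: ln_exp_div)
  then have "ln (exp 1 / t) > 0"
    by linarith
  have "sqrt t * ln (exp 1 / t) powr a \<le> sqrt t * ((2 * a) powr a * exp (ln (exp 1 / t) / 2))"
    using powr_le_exp_half[OF assms(1) \<open>ln (exp 1 / t) > 0\<close>] assms(2)
    by (intro mult_left_mono) auto
  also have "\<dots> = (2 * a) powr a * (sqrt t * exp (ln (exp 1 / t) / 2))"
    by (simp add: mult.left_commute)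
  also have "sqrt t * exp (ln (exp 1 / t) / 2) = exp (1 / 2)"
    using assms by (simp add: ln_exp_div sqrt_eq_exp_ln_half diff_divide_distrib exp_diff)
  finally have "sqrt t * ln (exp 1 / t) powr a \<le> (2 * a) powr a * exp (1 / 2)" .
  then show ?thesis
    using ell by (simp add: field_simps)
qed

lemma measure_nbhd_zeta_cantor_ge:
  fixes s :: real
  assumes s: "s > 1"
  shows "\<exists>c>0. \<forall>t\<in>{0<..1}.
    c / ln (exp 1 / t) powr (s - 1) \<le> measure lebesgue (nbhd (gen_cantor (zeta_weight s)) t)"
proof (intro exI conjI ballI)
  let ?c = "2 powr (- s) / (2 / ln 2) powr (s - 1) / zeta_real s"
  show "?c > 0"
    using zeta_real_pos[OF s] by simp
  fix t :: real assume "t \<in> {0<..1}"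
  then have t: "0 < t" "t \<le> 1" by auto
  define ell where "ell = ln (exp 1 / t)"
  have ell: "ell \<ge> 1"
    using t by (simp add: ell_def ln_exp_div)
  obtain n where n: "1 / 2 ^ n < t" "real (Suc n) \<le> 2 / ln 2 * ell"
    using exists_level_below[OF t] unfolding ell_def .
  have "(2 / ln 2 * ell) powr (s - 1) = (2 / ln 2) powr (s - 1) * ell powr (s - 1)"
    by (rule powr_mult)
  then have "?c / ell powr (s - 1) = 2 powr (- s) / (2 / ln 2 * ell) powr (s - 1) / zeta_real s"
    by simp
  also have "\<dots> \<le> 2 powr (- s) / real (Suc n) powr (s - 1) / zeta_real s"
    using n(2) s zeta_real_pos[OF s]
    by (intro divide_right_mono divide_left_mono powr_mono2 mult_pos_pos) auto
  also have "\<dots> \<le> zeta_tail s n / zeta_real s"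
    using zeta_real_pos[OF s] by (intro divide_right_mono zeta_tail_ge[OF s]) simp
  also have "\<dots> = 1 - (\<Sum>k=1..n. zeta_weight s k)"
    by (rule one_minus_sum_zeta_weight[OF s, symmetric])
  also have "\<dots> \<le> measure lebesgue (nbhd (gen_cantor (zeta_weight s)) t)"
    using cantor_length_le[OF zeta_weight_nonneg[OF s] sum_zeta_weight_le_1[OF s], of n] n(1)
    by (intro measure_nbhd_gen_cantor_ge[OF zeta_weight_nonneg[OF s] sum_zeta_weight_le_1[OF s]]) simp
  finally show "?c / ell powr (s - 1) \<le> measure lebesgue (nbhd (gen_cantor (zeta_weight s)) t)" .
qed

lemma measure_nbhd_zeta_cantor_le:
  fixes s :: real
  assumes s: "s > 1"
  shows "\<exists>c>0. \<forall>t\<in>{0<..1}.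
    measure lebesgue (nbhd (gen_cantor (zeta_weight s)) t) \<le> c / ln (exp 1 / t) powr (s - 1)"
proof (intro exI conjI ballI)
  let ?C = "(2 * (s - 1)) powr (s - 1) * exp (1 / 2)"
  let ?c = "s / (s - 1) * 3 powr (s - 1) / zeta_real s + 2 * ?C"
  show "?c > 0"
    using zeta_real_pos[OF s] s by (intro add_pos_pos) auto
  fix t :: real assume "t \<in> {0<..1}"
  then have t: "0 < t" "t \<le> 1" by auto
  define ell where "ell = ln (exp 1 / t)"
  have ell: "ell \<ge> 1"
    using t by (simp add: ell_def ln_exp_div)
  obtain n where n: "2 ^ n * t \<le> sqrt t" "ell \<le> 3 * real (Suc n)"
    using exists_level_above[OF t] unfolding ell_def .
  have "measure lebesgue (nbhd (gen_cantor (zeta_weight s)) t)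
      \<le> 2 ^ n * (cantor_length (zeta_weight s) n + 2 * t)"
    using t by (intro measure_nbhd_gen_cantor_le[OF zeta_weight_nonneg[OF s] sum_zeta_weight_le_1[OF s]]) simp
  also have "\<dots> = zeta_tail s n / zeta_real s + 2 * (2 ^ n * t)"
    by (simp add: cantor_length_zeta_weight[OF s] algebra_simps)
  also have "\<dots> \<le> s / (s - 1) / real (Suc n) powr (s - 1) / zeta_real s + 2 * sqrt t"
    using zeta_tail_le[OF s, of n] zeta_real_pos[OF s] n(1)
    by (intro add_mono divide_right_mono mult_left_mono) auto
  also have "\<dots> \<le> s / (s - 1) / (ell / 3) powr (s - 1) / zeta_real s + 2 * (?C / ell powr (s - 1))"
    using n(2) s ell zeta_real_pos[OF s] sqrt_le_ln_powr[of "s - 1", OF _ t, folded ell_def]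
    by (intro add_mono divide_right_mono divide_left_mono mult_left_mono powr_mono2 mult_pos_pos) auto
  also have "\<dots> = ?c / ell powr (s - 1)"
  proof -
    have "(ell / 3) powr (s - 1) = ell powr (s - 1) / 3 powr (s - 1)"
      by (rule powr_divide)
    moreover have "ell powr (s - 1) > 0"
      using ell by simp
    ultimately show ?thesis
      using s zeta_real_pos[OF s] by (simp add: field_simps)
  qed
  finally show "measure lebesgue (nbhd (gen_cantor (zeta_weight s)) t) \<le> ?c / ell powr (s - 1)" .
qed

theorem lemma4p4:
  fixes s :: real
  assumes "s > 1"
  shows "\<exists>c1 c2. c1 > 0 \<and> c2 > 0 \<and>
    (\<forall>t \<in> {0<..1}.
       c1 / (ln (exp 1 / t)) powr (s - 1)
         \<le> measure lebesgue (nbhd (gen_cantor (\<lambda>k. real k powr (- s) / zeta_real s)) t)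
     \<and> measure lebesgue (nbhd (gen_cantor (\<lambda>k. real k powr (- s) / zeta_real s)) t)
         \<le> c2 / (ln (exp 1 / t)) powr (s - 1))"
proof -
  have weight: "(\<lambda>k. real k powr (- s) / zeta_real s) = zeta_weight s"
    by (simp add: fun_eq_iff zeta_weight_def)
  obtain c1 where "c1 > 0" and lower: "\<forall>t\<in>{0<..1}.
      c1 / ln (exp 1 / t) powr (s - 1) \<le> measure lebesgue (nbhd (gen_cantor (zeta_weight s)) t)"
    using measure_nbhd_zeta_cantor_ge[OF assms] by blast
  obtain c2 where "c2 > 0" and upper: "\<forall>t\<in>{0<..1}.
      measure lebesgue (nbhd (gen_cantor (zeta_weight s)) t) \<le> c2 / ln (exp 1 / t) powr (s - 1)"
    using measure_nbhd_zeta_cantor_le[OF assms] by blast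
  show ?thesis
    unfolding weight using \<open>c1 > 0\<close> \<open>c2 > 0\<close> lower upper by blast
qed

end
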